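(* Suppose all speeds are integer multiples of a common factor $\epsilon\in(0,1]$ and the protocol is run with $\alpha=4s_{\max}/\epsilon$ from a (deterministic) initial state $X^0$. Let $T$ be the first round in which the system is in a Nash equilibrium, let $V=\epsilon^2/(8\Delta s_{\max}^3)$ and $Z_t=\Psi_1(X^t)+tV$. Then \[ \mathbb{E}[Z_T] \le Z_0 = \Psi_1(X^0). \]
   Context: $G=(V,E)$ is an undirected graph on $n$ vertices (processors) with maximum degree $\Delta$; $\deg(i)$ is the degree and $d_{ij}=\max\{\deg(i),\deg(j)\}$. Processor $i$ has speed $s_i=n_i\epsilon$ with $n_i$ a positive integer, speeds scaled so that the smallest speed is $1$; $s_{\max}=\max_i s_i$, $\mathcal{S}=\sum_i s_i$. There are $m$ unit tasks; in state $x$, $w_i(x)$ is the number of tasks on $i$ and $\ell_i(x)=w_i(x)/s_i$. Protocol: in each round every task, independently, with $i$ its current processor, chooses a uniformly random neighbor $j$; if $\ell_i-\ell_j>1/s_j$ it moves to $j$ with probability $\frac{\deg(i)}{d_{ij}}\cdot\frac{\ell_i-\ell_j}{\alpha(1/s_i+1/s_j)w_i}$, otherwise stays. $X^t$ is the state after $t$ rounds. $\Psi_1(x)=\sum_i \frac{w_i(x)(w_i(x)+1)}{s_i}-\frac{m^2}{\mathcal{S}}-\frac{mn}{\mathcal{S}}-\frac{n^2}{4\mathcal{S}}+\frac14\sum_i\frac{1}{s_i}$. A state is a Nash equilibrium if $\ell_i-\ell_j\le 1/s_j$ for every ordered pair $(i,j)$ of adjacent processors. *)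

theory Defs
  imports "HOL-Probability.Probability"
begin

text \<open>Vertices (processors) are 0,...,n-1. The graph is given by a symmetric,
irreflexive relation E. A state x assigns to every processor its number of tasks.\<close>

type_synonym state = "nat \<Rightarrow> nat"

definition nbrs :: "nat \<Rightarrow> (nat \<Rightarrow> nat \<Rightarrow> bool) \<Rightarrow> nat \<Rightarrow> nat set" where
  "nbrs n E i = {j. j < n \<and> E i j}"

definition deg :: "nat \<Rightarrow> (nat \<Rightarrow> nat \<Rightarrow> bool) \<Rightarrow> nat \<Rightarrow> nat" where
  "deg n E i = card (nbrs n E i)"

definition max_deg :: "nat \<Rightarrow> (nat \<Rightarrow> nat \<Rightarrow> bool) \<Rightarrow> nat" where
  "max_deg n E = Max (deg n E ` {..<n})"

definition s_max :: "nat \<Rightarrow> (nat \<Rightarrow> real) \<Rightarrow> real" where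
  "s_max n s = Max (s ` {..<n})"

definition S_tot :: "nat \<Rightarrow> (nat \<Rightarrow> real) \<Rightarrow> real" where
  "S_tot n s = (\<Sum>i<n. s i)"

definition load :: "(nat \<Rightarrow> real) \<Rightarrow> state \<Rightarrow> nat \<Rightarrow> real" where
  "load s x i = real (x i) / s i"

definition move_prob :: "nat \<Rightarrow> (nat \<Rightarrow> nat \<Rightarrow> bool) \<Rightarrow> (nat \<Rightarrow> real) \<Rightarrow> real
    \<Rightarrow> state \<Rightarrow> nat \<Rightarrow> nat \<Rightarrow> real" where
  "move_prob n E s \<alpha> x i j =
     real (deg n E i) / real (max (deg n E i) (deg n E j)) *
     ((load s x i - load s x j) / (\<alpha> * (1 / s i + 1 / s j) * real (x i)))"

definition task_dest :: "nat \<Rightarrow> (nat \<Rightarrow> nat \<Rightarrow> bool) \<Rightarrow> (nat \<Rightarrow> real) \<Rightarrow> real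
    \<Rightarrow> state \<Rightarrow> nat \<Rightarrow> nat pmf" where
  "task_dest n E s \<alpha> x i =
     (if nbrs n E i = {} then return_pmf i
      else pmf_of_set (nbrs n E i) \<bind> (\<lambda>j.
        if load s x i - load s x j > 1 / s j
        then map_pmf (\<lambda>b. if b then j else i) (bernoulli_pmf (move_prob n E s \<alpha> x i j))
        else return_pmf i))"

fun seq_pmf :: "'b pmf list \<Rightarrow> 'b list pmf" where
  "seq_pmf [] = return_pmf []"
| "seq_pmf (p # ps) = p \<bind> (\<lambda>y. seq_pmf ps \<bind> (\<lambda>ys. return_pmf (y # ys)))"

definition task_list :: "nat \<Rightarrow> state \<Rightarrow> nat list" where
  "task_list n x = concat (map (\<lambda>i. replicate (x i) i) [0..<n])"

definition step :: "nat \<Rightarrow> (nat \<Rightarrow> nat \<Rightarrow> bool) \<Rightarrow> (nat \<Rightarrow> real) \<Rightarrow> real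
    \<Rightarrow> state \<Rightarrow> state pmf" where
  "step n E s \<alpha> x =
     map_pmf (\<lambda>ds j. count_list ds j) (seq_pmf (map (task_dest n E s \<alpha> x) (task_list n x)))"

definition nash :: "nat \<Rightarrow> (nat \<Rightarrow> nat \<Rightarrow> bool) \<Rightarrow> (nat \<Rightarrow> real) \<Rightarrow> state \<Rightarrow> bool" where
  "nash n E s x \<longleftrightarrow> (\<forall>i<n. \<forall>j<n. E i j \<longrightarrow> load s x i - load s x j \<le> 1 / s j)"

definition psi1 :: "nat \<Rightarrow> (nat \<Rightarrow> real) \<Rightarrow> nat \<Rightarrow> state \<Rightarrow> real" where
  "psi1 n s m x =
     (\<Sum>i<n. real (x i) * (real (x i) + 1) / s i)
     - real m ^ 2 / S_tot n s - real m * real n / S_tot n s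
     - real n ^ 2 / (4 * S_tot n s) + 1/4 * (\<Sum>i<n. 1 / s i)"

text \<open>Z_T along a trajectory: T is the first round at which the state is a Nash
equilibrium; if there is none, Z_T is taken to be infinity.\<close>
definition Z_stop :: "nat \<Rightarrow> (nat \<Rightarrow> nat \<Rightarrow> bool) \<Rightarrow> (nat \<Rightarrow> real) \<Rightarrow> nat \<Rightarrow> real
    \<Rightarrow> (nat \<Rightarrow> state) \<Rightarrow> ennreal" where
  "Z_stop n E s m V xs =
     (if \<exists>t. nash n E s (xs t)
      then ennreal (psi1 n s m (xs (LEAST t. nash n E s (xs t)))
                    + real (LEAST t. nash n E s (xs t)) * V)
      else \<infinity>)"

end

theory Submission
  imports Defs
begin

text \<open>Write \<open>\<Phi>(x) = \<Sum>\<^sub>i x\<^sub>i (x\<^sub>i + 1) / s\<^sub>i\<close>, so that \<open>\<Psi>\<^sub>1 = \<Phi> + const\<close>. The expected value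
  of \<open>\<Phi>\<close> after one round is computed exactly from the first two moments of the independent task
  moves. In terms of the expected flows \<open>f i j\<close> it is \<open>\<Phi>(x)\<close> plus the linear term
  \<open>\<Sum> f i j \<cdot> 2 (load j - load i + 1/s j)\<close> plus variances and squared net flows, and the latter
  are bounded by the flows again. With \<open>\<alpha> = 4 s\<^sub>m\<^sub>a\<^sub>x / \<epsilon>\<close> every active edge then contributes at
  most \<open>-V\<close>, because speeds that are multiples of \<open>\<epsilon>\<close> force
  \<open>load i - load j - 1/s j \<ge> \<epsilon> / (s i \<cdot> s j)\<close> on it. So \<open>\<Psi>\<^sub>1\<close> of the chain stopped at \<open>T\<close>,
  plus \<open>min T t \<cdot> V\<close>, is a nonnegative supermartingale. Its expectation is evaluated on the finite
  distribution of paths of length \<open>t + 1\<close>, and Fatou's lemma passes to \<open>t \<rightarrow> \<infinity>\<close>; when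
  \<open>T = \<infinity>\<close> the stopped values grow like \<open>t V\<close>.\<close>

section \<open>Moments of independent products\<close>

lemma set_pmf_seq_pmf_subset:
  "set_pmf (seq_pmf ps) \<subseteq> {ds. set ds \<subseteq> (\<Union>p\<in>set ps. set_pmf p) \<and> length ds = length ps}"
  by (induction ps) (fastforce simp: subset_iff)+

lemma finite_set_pmf_seq_pmf:
  assumes "\<And>p. p \<in> set ps \<Longrightarrow> finite (set_pmf p)"
  shows "finite (set_pmf (seq_pmf ps))"
  using assms by (intro finite_subset[OF set_pmf_seq_pmf_subset] finite_lists_length_eq) auto

lemma nn_integral_seq_pmf_Cons:
  "(\<integral>\<^sup>+ds. f ds \<partial>seq_pmf (p # ps)) = (\<integral>\<^sup>+y. \<integral>\<^sup>+ys. f (y # ys) \<partial>seq_pmf ps \<partial>p)"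
  by (simp add: nn_integral_return)

lemma nn_integral_indicator_singleton_pmf:
  "(\<integral>\<^sup>+y. ennreal (indicator {k} y) \<partial>measure_pmf p) = ennreal (pmf p k)"
  by (simp add: ennreal_indicator emeasure_pmf_single)

lemma nn_integral_count_list_seq_pmf:
  "(\<integral>\<^sup>+ds. ennreal (real (count_list ds k)) \<partial>seq_pmf ps) = ennreal (\<Sum>p\<leftarrow>ps. pmf p k)"
proof (induction ps)
  case (Cons p ps)
  have nonneg: "0 \<le> (\<Sum>p\<leftarrow>ps. pmf p k)" by (intro sum_list_nonneg) auto
  have "(\<integral>\<^sup>+ds. ennreal (real (count_list ds k)) \<partial>seq_pmf (p # ps))
      = (\<integral>\<^sup>+y. \<integral>\<^sup>+ys. ennreal (indicator {k} y) + ennreal (real (count_list ys k)) \<partial>seq_pmf ps \<partial>p)"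
    unfolding nn_integral_seq_pmf_Cons
    by (intro nn_integral_cong) (auto simp: indicator_def simp flip: ennreal_plus)
  also have "\<dots> = ennreal (pmf p k) + ennreal (\<Sum>p\<leftarrow>ps. pmf p k)"
    by (simp add: nn_integral_add Cons measure_pmf.emeasure_space_1
        nn_integral_indicator_singleton_pmf)
  also have "\<dots> = ennreal (\<Sum>p\<leftarrow>p # ps. pmf p k)"
    using nonneg by (simp flip: ennreal_plus)
  finally show ?case .
qed simp

lemma nn_integral_count_list_sq_seq_pmf:
  "(\<integral>\<^sup>+ds. ennreal (real (count_list ds k)^2) \<partial>seq_pmf ps)
   = ennreal ((\<Sum>p\<leftarrow>ps. pmf p k)^2 + (\<Sum>p\<leftarrow>ps. pmf p k * (1 - pmf p k)))"
proof (induction ps)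
  case (Cons p ps)
  define \<mu> where "\<mu> = (\<Sum>p\<leftarrow>ps. pmf p k)"
  define v where "v = (\<Sum>p\<leftarrow>ps. pmf p k * (1 - pmf p k))"
  have \<mu>_nonneg: "\<mu> \<ge> 0" unfolding \<mu>_def by (intro sum_list_nonneg) auto
  have v_nonneg: "v \<ge> 0" unfolding v_def by (intro sum_list_nonneg) (auto simp: pmf_le_1)
  have "(\<integral>\<^sup>+ds. ennreal (real (count_list ds k)^2) \<partial>seq_pmf (p # ps))
      = (\<integral>\<^sup>+y. \<integral>\<^sup>+ys. ennreal (indicator {k} y) * ennreal (1 + 2 * real (count_list ys k))
          + ennreal (real (count_list ys k)^2) \<partial>seq_pmf ps \<partial>p)"
    unfolding nn_integral_seq_pmf_Cons
    by (intro nn_integral_cong) (auto simp: indicator_def power2_eq_square algebra_simps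
        simp flip: ennreal_plus)
  also have "\<dots> = (\<integral>\<^sup>+y. ennreal (indicator {k} y) * ennreal (1 + 2 * \<mu>) + ennreal (\<mu>^2 + v) \<partial>p)"
  proof -
    have "(\<integral>\<^sup>+ys. ennreal (1 + 2 * real (count_list ys k)) \<partial>seq_pmf ps)
        = (\<integral>\<^sup>+ys. 1 + 2 * ennreal (real (count_list ys k)) \<partial>seq_pmf ps)"
      by (intro nn_integral_cong) (simp add: ennreal_mult)
    also have "\<dots> = 1 + 2 * ennreal \<mu>"
      by (simp add: nn_integral_add nn_integral_cmult measure_pmf.emeasure_space_1
          nn_integral_count_list_seq_pmf \<mu>_def)
    also have "\<dots> = ennreal (1 + 2 * \<mu>)"
      using \<mu>_nonneg by (simp add: ennreal_mult)
    finally have "(\<integral>\<^sup>+ys. ennreal (1 + 2 * real (count_list ys k)) \<partial>seq_pmf ps)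
        = ennreal (1 + 2 * \<mu>)" .
    then show ?thesis
      by (simp add: nn_integral_add nn_integral_cmult Cons \<mu>_def v_def)
  qed
  also have "\<dots> = ennreal (pmf p k * (1 + 2 * \<mu>) + (\<mu>^2 + v))"
    using \<mu>_nonneg v_nonneg
    by (simp add: nn_integral_add nn_integral_multc measure_pmf.emeasure_space_1
        nn_integral_indicator_singleton_pmf ennreal_mult)
  also have "pmf p k * (1 + 2 * \<mu>) + (\<mu>^2 + v)
      = (\<Sum>p\<leftarrow>p # ps. pmf p k)^2 + (\<Sum>p\<leftarrow>p # ps. pmf p k * (1 - pmf p k))"
    by (simp add: \<mu>_def v_def power2_eq_square algebra_simps)
  finally show ?case .
qed simp

section \<open>One round of the protocol\<close>

lemma task_list_Suc: "task_list (Suc n) x = task_list n x @ replicate (x n) n"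
  by (simp add: task_list_def)

lemma length_task_list: "length (task_list n x) = (\<Sum>i<n. x i)"
  by (induction n) (auto simp: task_list_Suc task_list_def[of 0])

lemma set_task_list_subset: "set (task_list n x) \<subseteq> {..<n}"
  by (auto simp: task_list_def)

lemma sum_list_map_task_list:
  "(\<Sum>i\<leftarrow>task_list n x. f i) = (\<Sum>i<n. real (x i) * (f i :: real))"
  by (induction n) (simp_all add: task_list_def[of 0] task_list_Suc sum_list_replicate)

lemma nbrs_subset: "nbrs n E i \<subseteq> {..<n}"
  by (auto simp: nbrs_def)

lemma finite_nbrs [simp]: "finite (nbrs n E i)"
  by (rule finite_subset[OF nbrs_subset]) simp

lemma deg_pos: "j \<in> nbrs n E i \<Longrightarrow> 0 < deg n E i"
  unfolding deg_def by (auto simp: card_gt_0_iff)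

lemma set_pmf_task_dest_subset: "set_pmf (task_dest n E s \<alpha> x i) \<subseteq> insert i (nbrs n E i)"
  by (auto simp: task_dest_def split: if_splits)

lemma set_pmf_task_dest: "i < n \<Longrightarrow> set_pmf (task_dest n E s \<alpha> x i) \<subseteq> {..<n}"
  using set_pmf_task_dest_subset nbrs_subset by blast

lemma sum_step_eq:
  assumes "y \<in> set_pmf (step n E s \<alpha> x)"
  shows "(\<Sum>j<n. y j) = (\<Sum>i<n. x i)"
proof -
  let ?ps = "map (task_dest n E s \<alpha> x) (task_list n x)"
  obtain ds where ds: "ds \<in> set_pmf (seq_pmf ?ps)" and y: "y = count_list ds"
    using assms by (auto simp: step_def)
  have "(\<Union>p\<in>set ?ps. set_pmf p) \<subseteq> {..<n}"
    using set_pmf_task_dest[of _ n E s \<alpha> x] set_task_list_subset[of n x] by fastforce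
  moreover have "set ds \<subseteq> (\<Union>p\<in>set ?ps. set_pmf p)" "length ds = length ?ps"
    using set_pmf_seq_pmf_subset[of ?ps] ds by blast+
  ultimately show ?thesis
    by (simp add: y sum_count_set length_task_list)
qed

lemma finite_set_pmf_step: "finite (set_pmf (step n E s \<alpha> x))"
proof -
  have "finite (set_pmf (task_dest n E s \<alpha> x i))" for i
    by (rule finite_subset[OF set_pmf_task_dest_subset]) simp
  then show ?thesis
    unfolding step_def by (auto intro!: finite_imageI finite_set_pmf_seq_pmf)
qed

section \<open>Expected drift of the potential\<close>

definition phi :: "nat \<Rightarrow> (nat \<Rightarrow> real) \<Rightarrow> state \<Rightarrow> real" where
  "phi n s y = (\<Sum>k<n. real (y k) * (real (y k) + 1) / s k)"

lemma phi_nonneg: "\<forall>k<n. 0 < s k \<Longrightarrow> 0 \<le> phi n s y"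
  unfolding phi_def by (intro sum_nonneg) auto

lemma psi1_eq_phi: "psi1 n s m y = phi n s y + psi1 n s m (\<lambda>_. 0)"
  by (simp add: psi1_def phi_def)

lemma psi1_nonneg:
  assumes s_pos: "\<forall>i<n. 0 < s i" and tasks: "(\<Sum>i<n. y i) = m"
  shows "0 \<le> psi1 n s m y"
proof -
  let ?S = "S_tot n s" and ?a = "\<lambda>i. real (y i) + 1/2"
  have "(\<Sum>i<n. ?a i)^2 = (\<Sum>i<n. ?a i / sqrt (s i) * sqrt (s i))^2"
    using s_pos by (intro arg_cong[where f = "\<lambda>t. t^2"] sum.cong) auto
  also have "\<dots> \<le> (\<Sum>i<n. (?a i / sqrt (s i))^2) * (\<Sum>i<n. (sqrt (s i))^2)"
    by (rule Cauchy_Schwarz_ineq_sum)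
  also have "\<dots> = (phi n s y + 1/4 * (\<Sum>i<n. 1 / s i)) * ?S"
  proof -
    have "(?a i / sqrt (s i))^2 = real (y i) * (real (y i) + 1) / s i + 1/4 * (1 / s i)"
      if "i < n" for i
    proof -
      have "0 < s i" using s_pos that by simp
      moreover from this have "(sqrt (s i))^2 = s i" by simp
      ultimately show ?thesis
        unfolding power_divide by (simp add: field_simps power2_eq_square)
    qed
    moreover have "(\<Sum>i<n. (sqrt (s i))^2) = ?S"
      using s_pos unfolding S_tot_def by (intro sum.cong) (auto simp: less_imp_le)
    ultimately show ?thesis
      unfolding phi_def by (simp add: sum.distrib sum_distrib_left)
  qed
  finally have CS: "(real m + real n / 2)^2 \<le> (phi n s y + 1/4 * (\<Sum>i<n. 1 / s i)) * ?S"
    using tasks by (simp add: sum.distrib flip: of_nat_sum)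
  have "0 \<le> phi n s y + 1/4 * (\<Sum>i<n. 1 / s i)"
    using s_pos by (auto intro!: add_nonneg_nonneg phi_nonneg sum_nonneg simp: less_imp_le)
  moreover have "0 \<le> ?S"
    using s_pos unfolding S_tot_def by (intro sum_nonneg) (auto simp: less_imp_le)
  ultimately have "(real m + real n / 2)^2 / ?S \<le> phi n s y + 1/4 * (\<Sum>i<n. 1 / s i)"
    using CS by (cases "?S = 0") (auto simp: divide_le_eq mult.commute)
  moreover have "(real m + real n / 2)^2 / ?S
      = real m ^ 2 / ?S + real m * real n / ?S + real n ^ 2 / (4 * ?S)"
    by (simp add: power2_sum add_divide_distrib power_divide)
  ultimately show ?thesis
    unfolding psi1_def phi_def by linarith
qed

lemma ennreal_phi:
  assumes s_pos: "\<forall>k<n. 0 < s k"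
  shows "ennreal (phi n s y)
    = (\<Sum>k<n. ennreal (1 / s k) * (ennreal (real (y k)^2) + ennreal (real (y k))))"
proof -
  have "ennreal (real (y k) * (real (y k) + 1) / s k)
      = ennreal (1 / s k) * (ennreal (real (y k)^2) + ennreal (real (y k)))" if "k < n" for k
  proof -
    have "0 < s k" using s_pos that by simp
    then show ?thesis
      by (simp add: ennreal_mult'[symmetric] power2_eq_square algebra_simps add_divide_distrib
          flip: ennreal_plus)
  qed
  then show ?thesis
    unfolding phi_def using s_pos by (subst sum_ennreal[symmetric]) (auto simp: less_imp_le)
qed

lemma expectation_phi_step:
  fixes x :: state and E :: "nat \<Rightarrow> nat \<Rightarrow> bool" and \<alpha> :: real
  assumes s_pos: "\<forall>k<n. 0 < s k"
  defines "p \<equiv> \<lambda>i k. pmf (task_dest n E s \<alpha> x i) k"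
  shows "measure_pmf.expectation (step n E s \<alpha> x) (phi n s)
    = (\<Sum>k<n. ((\<Sum>i<n. real (x i) * p i k)^2 + (\<Sum>i<n. real (x i) * (p i k * (1 - p i k)))
                 + (\<Sum>i<n. real (x i) * p i k)) / s k)"
proof -
  let ?ps = "map (task_dest n E s \<alpha> x) (task_list n x)"
  let ?\<mu> = "\<lambda>k. \<Sum>i<n. real (x i) * p i k" and ?v = "\<lambda>k. \<Sum>i<n. real (x i) * (p i k * (1 - p i k))"
  have \<mu>_eq: "(\<Sum>i\<leftarrow>task_list n x. pmf (task_dest n E s \<alpha> x i) k) = ?\<mu> k" for k
    unfolding p_def by (rule sum_list_map_task_list)
  have v_eq: "(\<Sum>i\<leftarrow>task_list n x. pmf (task_dest n E s \<alpha> x i) k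
      * (1 - pmf (task_dest n E s \<alpha> x i) k)) = ?v k" for k
    unfolding p_def by (rule sum_list_map_task_list)
  have \<mu>_nonneg: "0 \<le> ?\<mu> k" and v_nonneg: "0 \<le> ?v k" for k
    by (auto intro!: sum_nonneg simp: p_def pmf_le_1)
  have "(\<integral>\<^sup>+y. phi n s y \<partial>step n E s \<alpha> x)
      = (\<Sum>k<n. ennreal (1 / s k) * (ennreal (?\<mu> k ^ 2 + ?v k) + ennreal (?\<mu> k)))"
    unfolding step_def nn_integral_map_pmf ennreal_phi[OF s_pos]
    by (simp add: nn_integral_sum nn_integral_cmult nn_integral_add
        nn_integral_count_list_seq_pmf nn_integral_count_list_sq_seq_pmf comp_def
        \<mu>_eq v_eq)
  also have "\<dots> = ennreal (\<Sum>k<n. (?\<mu> k ^ 2 + ?v k + ?\<mu> k) / s k)"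
    using s_pos \<mu>_nonneg v_nonneg
    by (subst sum_ennreal[symmetric])
       (auto intro!: sum.cong simp: ennreal_mult'[symmetric] add_divide_distrib
         simp flip: ennreal_plus)
  finally have "(\<integral>\<^sup>+y. phi n s y \<partial>step n E s \<alpha> x)
      = ennreal (\<Sum>k<n. (?\<mu> k ^ 2 + ?v k + ?\<mu> k) / s k)" .
  moreover have "(\<integral>\<^sup>+y. phi n s y \<partial>step n E s \<alpha> x)
      = ennreal (measure_pmf.expectation (step n E s \<alpha> x) (phi n s))"
    using s_pos
    by (intro nn_integral_eq_integral integrable_measure_pmf_finite finite_set_pmf_step)
       (auto simp: phi_nonneg)
  moreover have "0 \<le> measure_pmf.expectation (step n E s \<alpha> x) (phi n s)"
    using s_pos by (simp add: phi_nonneg)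
  moreover have "0 \<le> (\<Sum>k<n. (?\<mu> k ^ 2 + ?v k + ?\<mu> k) / s k)"
    using s_pos \<mu>_nonneg v_nonneg
    by (auto intro!: sum_nonneg divide_nonneg_nonneg simp: less_imp_le)
  ultimately show ?thesis by simp
qed

text \<open>Here \<open>f\<close> is the matrix of expected flows: the mean load at \<open>k\<close> is \<open>x k + inflow - outflow\<close>,
  and the variance at \<open>k\<close> is at most \<open>inflow + outflow\<close>.\<close>
lemma second_moment_le_flow:
  fixes x :: "nat \<Rightarrow> real" and p :: "nat \<Rightarrow> nat \<Rightarrow> real"
  assumes x_nonneg: "\<forall>i<n. 0 \<le> x i" and p_nonneg: "\<forall>i<n. \<forall>j<n. 0 \<le> p i j"
    and p_sum: "\<forall>i<n. (\<Sum>j<n. p i j) = 1" and k: "k < n"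
  defines "f \<equiv> \<lambda>i j. if i = j then 0 else x i * p i j"
  shows "(\<Sum>i<n. x i * p i k)^2 + (\<Sum>i<n. x i * (p i k * (1 - p i k))) + (\<Sum>i<n. x i * p i k)
     \<le> (x k + ((\<Sum>i<n. f i k) - (\<Sum>j<n. f k j)))^2 + x k + 2 * (\<Sum>i<n. f i k)"
proof -
  have in_eq: "(\<Sum>i<n. f i k) = (\<Sum>i<n. x i * p i k) - x k * p k k"
    using k by (simp add: f_def sum.remove[of "{..<n}" k] if_distrib sum.If_cases Diff_eq)
  have out_eq: "(\<Sum>j<n. f k j) = x k - x k * p k k"
  proof -
    have "(\<Sum>j<n. f k j) = x k * (\<Sum>j<n. p k j) - x k * p k k"
      using k by (simp add: f_def sum.remove[of "{..<n}" k] sum_distrib_left distrib_left)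
    then show ?thesis using p_sum k by simp
  qed
  have "(\<Sum>i<n. x i * (p i k * (1 - p i k))) \<le> (\<Sum>i<n. if i = k then x k * (1 - p k k) else f i k)"
  proof (intro sum_mono)
    fix i assume "i \<in> {..<n}"
    then have "0 \<le> x i" "0 \<le> p i k" "p i k \<le> 1"
      using x_nonneg p_nonneg k member_le_sum[of k "{..<n}" "p i"] p_sum by auto
    then show "x i * (p i k * (1 - p i k)) \<le> (if i = k then x k * (1 - p k k) else f i k)"
      by (auto simp: f_def intro!: mult_left_mono mult_left_le_one_le mult_right_le_one_le)
  qed
  also have "\<dots> = x k * (1 - p k k) + (\<Sum>i<n. f i k)"
    using k by (simp add: sum.remove[of "{..<n}" k] f_def)
  finally have "(\<Sum>i<n. x i * (p i k * (1 - p i k))) \<le> (\<Sum>i<n. f i k) + (\<Sum>j<n. f k j)"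
    using out_eq by (simp add: algebra_simps)
  moreover have "(\<Sum>i<n. x i * p i k) = x k + ((\<Sum>i<n. f i k) - (\<Sum>j<n. f k j))"
    using in_eq out_eq by simp
  ultimately show ?thesis by simp
qed

lemma sum_flow_expansion:
  fixes x s :: "nat \<Rightarrow> real" and f :: "nat \<Rightarrow> nat \<Rightarrow> real"
  shows "(\<Sum>k<n. ((x k + ((\<Sum>i<n. f i k) - (\<Sum>j<n. f k j)))^2 + x k + 2 * (\<Sum>i<n. f i k)) / s k)
    = (\<Sum>k<n. (x k^2 + x k) / s k)
      + (\<Sum>i<n. \<Sum>j<n. f i j * (2 * (x j / s j - x i / s i + 1 / s j)))
      + (\<Sum>k<n. (\<Sum>j<n. f j k - f k j)^2 / s k)"
proof -
  have expand: "((x k + (a - b))^2 + x k + 2 * a) / s k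
      = (x k^2 + x k) / s k + (a * (2 * (x k / s k) + 2 / s k) - b * (2 * (x k / s k)))
        + (a - b)^2 / s k" for k a b
    by (simp add: power2_eq_square diff_divide_distrib add_divide_distrib algebra_simps)
  have inflow: "(\<Sum>k<n. (\<Sum>i<n. f i k) * c k) = (\<Sum>i<n. \<Sum>j<n. f i j * c j)" for c
    by (simp add: sum_distrib_right) (rule sum.swap)
  have outflow: "(\<Sum>k<n. (\<Sum>j<n. f k j) * d k) = (\<Sum>i<n. \<Sum>j<n. f i j * d i)" for d
    by (simp add: sum_distrib_right)
  have "(\<Sum>k<n. (\<Sum>i<n. f i k) * (2 * (x k / s k) + 2 / s k) - (\<Sum>j<n. f k j) * (2 * (x k / s k)))
      = (\<Sum>i<n. \<Sum>j<n. f i j * (2 * (x j / s j - x i / s i + 1 / s j)))"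
    unfolding sum_subtractf inflow outflow
    by (simp add: algebra_simps flip: sum_subtractf)
  then show ?thesis
    by (simp add: expand sum.distrib sum_subtractf)
qed

lemma sum_net_flow_sq_le:
  fixes f :: "nat \<Rightarrow> nat \<Rightarrow> real" and s :: "nat \<Rightarrow> real" and N :: "nat \<Rightarrow> nat set"
  assumes N_subset: "\<forall>i<n. N i \<subseteq> {..<n}"
    and N_sym: "\<forall>i<n. \<forall>j<n. j \<in> N i \<longleftrightarrow> i \<in> N j"
    and f_supp: "\<forall>i<n. \<forall>j<n. j \<notin> N i \<longrightarrow> f i j = 0"
    and f_nonneg: "\<forall>i<n. \<forall>j<n. 0 \<le> f i j"
    and s_pos: "\<forall>i<n. 0 < s i"
  shows "(\<Sum>k<n. (\<Sum>j<n. f j k - f k j)^2 / s k)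
    \<le> (\<Sum>i<n. \<Sum>j<n. (f i j)^2 * (real (card (N i)) / s i + real (card (N j)) / s j))"
proof -
  have "(\<Sum>j<n. f j k - f k j)^2 / s k \<le> (\<Sum>j<n. real (card (N k)) / s k * ((f j k)^2 + (f k j)^2))"
    if k: "k < n" for k
  proof -
    have net_supp: "(\<Sum>j<n. f j k - f k j) = (\<Sum>j\<in>N k. f j k - f k j)"
      using N_subset N_sym f_supp k by (intro sum.mono_neutral_right) auto
    have "(\<Sum>j\<in>N k. (f j k - f k j)^2) \<le> (\<Sum>j\<in>N k. (f j k)^2 + (f k j)^2)"
    proof (intro sum_mono)
      fix j assume "j \<in> N k"
      then have "j < n" using N_subset k by auto
      then show "(f j k - f k j)^2 \<le> (f j k)^2 + (f k j)^2"
        using f_nonneg k by (simp add: power2_diff)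
    qed
    also have "\<dots> \<le> (\<Sum>j<n. (f j k)^2 + (f k j)^2)"
      using N_subset k by (intro sum_mono2) auto
    finally have "(\<Sum>j\<in>N k. (f j k - f k j)^2) * card (N k)
        \<le> (\<Sum>j<n. (f j k)^2 + (f k j)^2) * card (N k)"
      by (rule mult_right_mono) simp
    then have "(\<Sum>j<n. f j k - f k j)^2 \<le> real (card (N k)) * (\<Sum>j<n. (f j k)^2 + (f k j)^2)"
      using sum_squared_le_sum_of_squares[of "\<lambda>j. f j k - f k j" "N k"]
      by (simp add: net_supp mult.commute)
    then have "(\<Sum>j<n. f j k - f k j)^2 / s k
        \<le> real (card (N k)) * (\<Sum>j<n. (f j k)^2 + (f k j)^2) / s k"
      using s_pos k by (intro divide_right_mono) auto
    then show ?thesis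
      by (simp add: sum_distrib_left sum_divide_distrib)
  qed
  then have "(\<Sum>k<n. (\<Sum>j<n. f j k - f k j)^2 / s k)
      \<le> (\<Sum>k<n. \<Sum>j<n. real (card (N k)) / s k * ((f j k)^2 + (f k j)^2))"
    by (intro sum_mono) auto
  also have "\<dots> = (\<Sum>k<n. \<Sum>j<n. real (card (N k)) / s k * (f j k)^2)
      + (\<Sum>k<n. \<Sum>j<n. real (card (N k)) / s k * (f k j)^2)"
    by (simp add: distrib_left sum.distrib)
  also have "(\<Sum>k<n. \<Sum>j<n. real (card (N k)) / s k * (f j k)^2)
      = (\<Sum>j<n. \<Sum>k<n. real (card (N k)) / s k * (f j k)^2)"
    by (rule sum.swap)
  also have "\<dots> + (\<Sum>k<n. \<Sum>j<n. real (card (N k)) / s k * (f k j)^2)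
      = (\<Sum>i<n. \<Sum>j<n. (f i j)^2 * (real (card (N i)) / s i + real (card (N j)) / s j))"
    by (simp add: algebra_simps flip: sum.distrib)
  finally show ?thesis .
qed

lemma expected_quadratic_le_flows:
  fixes x s :: "nat \<Rightarrow> real" and p :: "nat \<Rightarrow> nat \<Rightarrow> real" and N :: "nat \<Rightarrow> nat set"
  assumes x_nonneg: "\<forall>i<n. 0 \<le> x i" and p_nonneg: "\<forall>i<n. \<forall>j<n. 0 \<le> p i j"
    and p_sum: "\<forall>i<n. (\<Sum>j<n. p i j) = 1" and s_pos: "\<forall>i<n. 0 < s i"
    and N_subset: "\<forall>i<n. N i \<subseteq> {..<n}" and N_sym: "\<forall>i<n. \<forall>j<n. j \<in> N i \<longleftrightarrow> i \<in> N j"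
    and p_supp: "\<forall>i<n. \<forall>j<n. j \<noteq> i \<longrightarrow> j \<notin> N i \<longrightarrow> p i j = 0"
  defines "f \<equiv> \<lambda>i j. if i = j then 0 else x i * p i j"
  shows "(\<Sum>k<n. ((\<Sum>i<n. x i * p i k)^2 + (\<Sum>i<n. x i * (p i k * (1 - p i k)))
        + (\<Sum>i<n. x i * p i k)) / s k)
    \<le> (\<Sum>k<n. (x k^2 + x k) / s k) + (\<Sum>i<n. \<Sum>j<n. f i j * (2 * (x j / s j - x i / s i + 1 / s j))
        + (f i j)^2 * (real (card (N i)) / s i + real (card (N j)) / s j))"
proof -
  have "(\<Sum>k<n. ((\<Sum>i<n. x i * p i k)^2 + (\<Sum>i<n. x i * (p i k * (1 - p i k)))
        + (\<Sum>i<n. x i * p i k)) / s k)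
      \<le> (\<Sum>k<n. ((x k + ((\<Sum>i<n. f i k) - (\<Sum>j<n. f k j)))^2 + x k + 2 * (\<Sum>i<n. f i k)) / s k)"
    using s_pos unfolding f_def
    by (intro sum_mono divide_right_mono second_moment_le_flow x_nonneg p_nonneg p_sum) auto
  also have "\<dots> = (\<Sum>k<n. (x k^2 + x k) / s k)
      + (\<Sum>i<n. \<Sum>j<n. f i j * (2 * (x j / s j - x i / s i + 1 / s j)))
      + (\<Sum>k<n. (\<Sum>j<n. f j k - f k j)^2 / s k)"
    by (rule sum_flow_expansion)
  also have "(\<Sum>k<n. (\<Sum>j<n. f j k - f k j)^2 / s k)
      \<le> (\<Sum>i<n. \<Sum>j<n. (f i j)^2 * (real (card (N i)) / s i + real (card (N j)) / s j))"
    using x_nonneg p_nonneg p_supp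
    by (intro sum_net_flow_sq_le N_subset N_sym s_pos) (auto simp: f_def)
  finally show ?thesis by (simp add: sum.distrib add.assoc)
qed

lemma double_sum_le_term:
  fixes t :: "nat \<Rightarrow> nat \<Rightarrow> real"
  assumes "\<forall>i<n. \<forall>j<n. t i j \<le> 0" "i0 < n" "j0 < n"
  shows "(\<Sum>i<n. \<Sum>j<n. t i j) \<le> t i0 j0"
proof -
  have "- case_prod t (i0, j0) \<le> (\<Sum>q\<in>{..<n} \<times> {..<n}. - case_prod t q)"
    using assms by (intro member_le_sum) auto
  then show ?thesis by (simp add: sum.cartesian_product sum_negf case_prod_unfold)
qed

lemma speed_ge_1:
  fixes s :: "nat \<Rightarrow> real"
  assumes "(MIN i\<in>{..<n}. s i) = 1" "i < n"
  shows "1 \<le> s i"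
proof -
  have "Min (s ` {..<n}) \<le> s i" using assms(2) by (intro Min_le) auto
  then show ?thesis using assms(1) by simp
qed

lemma speed_le_s_max: "i < n \<Longrightarrow> s i \<le> s_max n s"
  unfolding s_max_def by (intro Max_ge) auto

lemma deg_le_max_deg: "i < n \<Longrightarrow> deg n E i \<le> max_deg n E"
  unfolding max_deg_def by (intro Max_ge) auto

lemma pmf_task_dest:
  assumes "j \<noteq> i"
    and move_prob_le_1: "\<And>j. j \<in> nbrs n E i \<Longrightarrow> load s x i - load s x j > 1 / s j \<Longrightarrow>
      0 \<le> move_prob n E s \<alpha> x i j \<and> move_prob n E s \<alpha> x i j \<le> 1"
  shows "pmf (task_dest n E s \<alpha> x i) j =
    (if j \<in> nbrs n E i \<and> load s x i - load s x j > 1 / s j then move_prob n E s \<alpha> x i j else 0)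
      / real (deg n E i)"
proof (cases "nbrs n E i = {}")
  case False
  have "pmf (if load s x i - load s x j' > 1 / s j'
        then map_pmf (\<lambda>b. if b then j' else i) (bernoulli_pmf (move_prob n E s \<alpha> x i j'))
        else return_pmf i) j
      = (if j' = j \<and> load s x i - load s x j > 1 / s j then move_prob n E s \<alpha> x i j else 0)"
    if "j' \<in> nbrs n E i" for j'
  proof -
    have "(\<lambda>b. if b then j' else i) -` {j} = (if j' = j then {True} else {})"
      using \<open>j \<noteq> i\<close> by (auto split: if_splits)
    then show ?thesis
      using move_prob_le_1[OF that] \<open>j \<noteq> i\<close> by (auto simp: pmf_map measure_pmf_single)
  qed
  then show ?thesis
    using False
    by (cases "load s x i - load s x j > 1 / s j")
       (simp_all add: task_dest_def pmf_bind_pmf_of_set deg_def sum.delta cong: sum.cong)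
qed (use \<open>j \<noteq> i\<close> in \<open>simp add: task_dest_def\<close>)

lemma tasks_pos_if_active:
  assumes "load s x i - load s x j > 1 / s j" "0 < s i" "0 < s j"
  shows "0 < x i"
proof -
  have "0 \<le> load s x j" "0 < 1 / s j" using assms by (simp_all add: load_def)
  then have "0 < load s x i" using assms(1) by linarith
  then show ?thesis using assms(2) by (simp add: load_def zero_less_divide_iff)
qed

lemma move_prob_bounds:
  assumes j: "j \<in> nbrs n E i" and active: "load s x i - load s x j > 1 / s j"
    and s_pos: "0 < s i" "0 < s j" and \<alpha>: "1 \<le> \<alpha>"
  shows "0 \<le> move_prob n E s \<alpha> x i j \<and> move_prob n E s \<alpha> x i j \<le> 1"
proof -
  let ?D = "load s x i - load s x j" and ?c = "\<alpha> * (1 / s i + 1 / s j) * real (x i)"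
  have "0 < ?D" using active divide_pos_pos[OF zero_less_one s_pos(2)] by linarith
  have load_j: "0 \<le> load s x j" using s_pos by (simp add: load_def)
  have "0 < real (x i)" using tasks_pos_if_active[OF active s_pos] by simp
  have "?D \<le> real (x i) / s i" using load_j by (simp add: load_def)
  also have "\<dots> \<le> (1 / s i + 1 / s j) * real (x i)" using s_pos by (simp add: algebra_simps)
  also have "\<dots> \<le> ?c"
    using mult_right_mono[OF \<alpha>, of "(1 / s i + 1 / s j) * real (x i)"] s_pos
    by (simp add: mult.assoc)
  finally have "?D / ?c \<le> 1" using \<open>0 < ?D\<close> by (simp add: divide_le_eq_1)
  moreover have "0 \<le> ?D / ?c" using \<open>0 < ?D\<close> \<open>0 < real (x i)\<close> \<alpha> s_pos by simp
  moreover have "real (deg n E i) / real (max (deg n E i) (deg n E j)) \<le> 1"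
    using deg_pos[OF j] by simp
  ultimately show ?thesis
    unfolding move_prob_def
    by (metis mult_le_one mult_nonneg_nonneg divide_nonneg_nonneg of_nat_0_le_iff)
qed

lemma expected_flow_task_dest:
  assumes "j \<noteq> i" "i < n" and s_pos: "\<forall>k<n. 0 < s k" and \<alpha>: "1 \<le> \<alpha>"
  shows "real (x i) * pmf (task_dest n E s \<alpha> x i) j =
    (if j \<in> nbrs n E i \<and> load s x i - load s x j > 1 / s j
     then (load s x i - load s x j) / (real (max (deg n E i) (deg n E j)) * \<alpha> * (1 / s i + 1 / s j))
     else 0)"
proof -
  have "pmf (task_dest n E s \<alpha> x i) j =
    (if j \<in> nbrs n E i \<and> load s x i - load s x j > 1 / s j then move_prob n E s \<alpha> x i j else 0)
      / real (deg n E i)"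
    using assms nbrs_subset[of n E i] by (intro pmf_task_dest move_prob_bounds) auto
  moreover have "real (x i) * (move_prob n E s \<alpha> x i j / real (deg n E i))
      = (load s x i - load s x j) / (real (max (deg n E i) (deg n E j)) * \<alpha> * (1 / s i + 1 / s j))"
    if "j \<in> nbrs n E i" "load s x i - load s x j > 1 / s j"
  proof -
    have "0 < deg n E i" using that(1) by (rule deg_pos)
    moreover have "0 < s i" "0 < s j"
      using s_pos \<open>i < n\<close> nbrs_subset[of n E i] that(1) by auto
    then have "0 < real (x i)"
      using tasks_pos_if_active[OF that(2)] by simp
    moreover have "X * (A / B * (D / (C * X)) / A) = D / (B * C)" if "X \<noteq> 0" "A \<noteq> 0"
      for X A B C D :: real
      using that by (simp add: field_simps)
    ultimately show ?thesis
      unfolding move_prob_def by (simp add: mult.assoc)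
  qed
  ultimately show ?thesis by auto
qed

lemma load_gap_ge:
  assumes si: "s i = real a * \<epsilon>" and sj: "s j = real b * \<epsilon>" and "0 < a" "0 < b" "0 < \<epsilon>"
    and active: "load s x i - load s x j > 1 / s j"
  shows "\<epsilon> / (s i * s j) \<le> load s x i - load s x j - 1 / s j"
proof -
  define N where "N = int (x i) * int b - (int (x j) + 1) * int a"
  have pos: "0 < real a * real b * \<epsilon>" using assms by simp
  have eq: "load s x i - load s x j - 1 / s j = real_of_int N / (real a * real b * \<epsilon>)"
    unfolding load_def si sj N_def using assms by (simp add: field_simps)
  then have "0 < real_of_int N / (real a * real b * \<epsilon>)" using active by simp
  then have "1 \<le> N" using pos by (simp add: zero_less_divide_iff)
  then have "1 / (real a * real b * \<epsilon>) \<le> real_of_int N / (real a * real b * \<epsilon>)"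
    using pos by (intro divide_right_mono) auto
  moreover have "1 / (real a * real b * \<epsilon>) = \<epsilon> / (s i * s j)"
    unfolding si sj using assms by (simp add: field_simps)
  ultimately show ?thesis using eq by simp
qed

text \<open>With \<open>\<delta> = D - 1/s\<^sub>j \<ge> \<epsilon>/(s\<^sub>i s\<^sub>j)\<close>, the choice of \<alpha> gives \<open>D/\<alpha> \<le> \<delta>/2\<close>, so the bracket is
  at most \<open>-3\<delta>/2\<close>, while \<open>D \<delta> / (1/s\<^sub>i + 1/s\<^sub>j) \<ge> \<epsilon> / (2 s\<^sub>m\<^sub>a\<^sub>x\<^sup>2)\<close>.\<close>
lemma edge_drift_le:
  fixes si sj smax \<epsilon> d \<Delta> \<alpha> D :: real
  assumes si: "1 \<le> si" "si \<le> smax" and sj: "1 \<le> sj" "sj \<le> smax"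
    and \<epsilon>: "0 < \<epsilon>" "\<epsilon> \<le> 1" and \<alpha>: "\<alpha> = 4 * smax / \<epsilon>"
    and d: "1 \<le> d" "d \<le> \<Delta>"
    and gap: "\<epsilon> / (si * sj) \<le> D - 1 / sj"
  shows "D / (d * \<alpha> * (1 / si + 1 / sj)) * (2 * (1 / sj - D) + D / \<alpha>)
    \<le> - (\<epsilon>^2 / (8 * \<Delta> * smax^3))"
proof -
  define \<delta> where "\<delta> = D - 1 / sj"
  have smax: "1 \<le> smax" using si by simp
  have "\<epsilon> / (smax * sj) \<le> \<epsilon> / (si * sj)" using si sj \<epsilon> by (intro frac_le) auto
  then have \<delta>_ge: "\<epsilon> / (smax * sj) \<le> \<delta>" using gap unfolding \<delta>_def by linarith
  moreover have "0 \<le> \<epsilon> / (smax * sj)" using \<epsilon> smax sj by simp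
  ultimately have \<delta>_nonneg: "0 \<le> \<delta>" by linarith
  have D_ge: "1 / sj \<le> D" using \<delta>_nonneg unfolding \<delta>_def by simp
  moreover have "0 < 1 / sj" using sj by simp
  ultimately have D_pos: "0 < D" by linarith
  have \<alpha>_pos: "0 < \<alpha>" using \<alpha> \<epsilon> smax by simp
  have "\<delta> * (\<epsilon> / (4 * smax)) \<le> \<delta> * (1/4)"
    using \<delta>_nonneg \<epsilon> smax by (intro mult_left_mono) (auto simp: field_simps)
  moreover have "\<epsilon> / (4 * smax * sj) \<le> \<delta> / 4" using \<delta>_ge smax sj by (simp add: field_simps)
  moreover have "D / \<alpha> = \<delta> * (\<epsilon> / (4 * smax)) + \<epsilon> / (4 * smax * sj)"
    using sj smax \<epsilon> unfolding \<delta>_def \<alpha> by (simp add: field_simps)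
  ultimately have "D / \<alpha> \<le> \<delta> / 2" by linarith
  moreover have "2 * (1 / sj - D) = - 2 * \<delta>" unfolding \<delta>_def by simp
  ultimately have bracket: "2 * (1 / sj - D) + D / \<alpha> \<le> - (3/2 * \<delta>)" by linarith
  have "(1 / sj) * (\<epsilon> / (si * sj)) \<le> D * \<delta>"
    using D_ge D_pos gap sj si \<epsilon> unfolding \<delta>_def by (intro mult_mono) auto
  then have "(1 / sj) * (\<epsilon> / (si * sj)) / (1 / si + 1 / sj) \<le> D * \<delta> / (1 / si + 1 / sj)"
    using si sj by (intro divide_right_mono) (auto simp: add_pos_pos)
  moreover have "(1 / sj) * (\<epsilon> / (si * sj)) / (1 / si + 1 / sj) = \<epsilon> / (sj * (si + sj))"
    using si sj by (simp add: field_simps)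
  moreover have "\<epsilon> / (2 * smax^2) \<le> \<epsilon> / (sj * (si + sj))"
  proof -
    have "sj * (si + sj) \<le> smax * (2 * smax)" using si sj by (intro mult_mono) auto
    then show ?thesis using \<epsilon> si sj by (intro divide_left_mono) (auto simp: power2_eq_square)
  qed
  ultimately have key: "\<epsilon> / (2 * smax^2) \<le> D * \<delta> / (1 / si + 1 / sj)" by linarith
  have "D / (d * \<alpha> * (1 / si + 1 / sj)) * (2 * (1 / sj - D) + D / \<alpha>)
      \<le> D / (d * \<alpha> * (1 / si + 1 / sj)) * (- (3/2 * \<delta>))"
    using bracket D_pos d \<alpha>_pos si sj by (intro mult_left_mono) (auto simp: add_pos_pos)
  also have "\<dots> = - (3/2 / (d * \<alpha>) * (D * \<delta> / (1 / si + 1 / sj)))"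
    using d \<alpha>_pos si sj by (simp add: field_simps)
  also have "\<dots> \<le> - (3/2 / (\<Delta> * \<alpha>) * (\<epsilon> / (2 * smax^2)))"
  proof -
    have "3/2 / (\<Delta> * \<alpha>) \<le> 3/2 / (d * \<alpha>)" using d \<alpha>_pos by (intro divide_left_mono) auto
    then have "3/2 / (\<Delta> * \<alpha>) * (\<epsilon> / (2 * smax^2)) \<le> 3/2 / (d * \<alpha>) * (D * \<delta> / (1 / si + 1 / sj))"
      using key \<epsilon> \<alpha>_pos d by (intro mult_mono) auto
    then show ?thesis by simp
  qed
  also have "\<dots> = - (3 * \<epsilon>^2 / (16 * \<Delta> * smax^3))"
    using \<epsilon> smax d unfolding \<alpha> by (simp add: field_simps power2_eq_square power3_eq_cube)
  also have "\<dots> \<le> - (\<epsilon>^2 / (8 * \<Delta> * smax^3))"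
    using d smax by (simp add: field_simps)
  finally show ?thesis .
qed

lemma active_edge_term_le:
  assumes i: "i < n" and j: "j \<in> nbrs n E i"
    and active: "load s x i - load s x j > 1 / s j"
    and eps: "0 < \<epsilon>" "\<epsilon> \<le> 1"
    and speeds: "\<forall>i<n. \<exists>k::nat. k > 0 \<and> s i = real k * \<epsilon>"
    and min_speed: "(MIN i\<in>{..<n}. s i) = 1"
  defines "\<alpha> \<equiv> 4 * s_max n s / \<epsilon>"
  defines "g \<equiv> (load s x i - load s x j)
    / (real (max (deg n E i) (deg n E j)) * \<alpha> * (1 / s i + 1 / s j))"
  shows "g * (2 * (real (x j) / s j - real (x i) / s i + 1 / s j))
      + g^2 * (real (deg n E i) / s i + real (deg n E j) / s j)
    \<le> - (\<epsilon>^2 / (8 * real (max_deg n E) * s_max n s ^ 3))"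
proof -
  let ?D = "load s x i - load s x j" and ?d = "real (max (deg n E i) (deg n E j))"
  have "j < n" using j nbrs_subset by blast
  have s_i: "1 \<le> s i" "s i \<le> s_max n s" and s_j: "1 \<le> s j" "s j \<le> s_max n s"
    using speed_ge_1[OF min_speed] speed_le_s_max i \<open>j < n\<close> by auto
  have d: "1 \<le> ?d" "?d \<le> real (max_deg n E)"
    using deg_pos[OF j] deg_le_max_deg[OF i] deg_le_max_deg[OF \<open>j < n\<close>] by auto
  have "0 < \<alpha>" using eps s_i unfolding \<alpha>_def by simp
  obtain a b :: nat where "0 < a" "s i = real a * \<epsilon>" "0 < b" "s j = real b * \<epsilon>"
    using speeds i \<open>j < n\<close> by blast
  then have gap: "\<epsilon> / (s i * s j) \<le> ?D - 1 / s j"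
    using load_gap_ge[OF _ _ _ _ eps(1) active] by blast
  have "0 < ?D" using active divide_pos_pos[of 1 "s j"] s_j by linarith
  then have "0 \<le> g" using \<open>0 < \<alpha>\<close> d s_i s_j unfolding g_def by (simp add: add_pos_pos)
  have "real (deg n E i) / s i + real (deg n E j) / s j \<le> ?d * (1 / s i + 1 / s j)"
    using s_i s_j by (simp add: distrib_left) (intro add_mono divide_right_mono, auto)
  then have "g^2 * (real (deg n E i) / s i + real (deg n E j) / s j)
      \<le> g^2 * (?d * (1 / s i + 1 / s j))"
    by (rule mult_left_mono) simp
  also have "\<dots> = g * (?D / \<alpha>)"
  proof -
    have "(D' / (d' * a * S))^2 * (d' * S) = D' / (d' * a * S) * (D' / a)"
      if "0 < d'" "0 < a" "0 < S" for D' d' a S :: real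
      using that by (simp add: field_simps power2_eq_square)
    then show ?thesis
      using d \<open>0 < \<alpha>\<close> s_i s_j unfolding g_def by (simp add: add_pos_pos)
  qed
  finally have "g * (2 * (real (x j) / s j - real (x i) / s i + 1 / s j))
      + g^2 * (real (deg n E i) / s i + real (deg n E j) / s j)
      \<le> g * (2 * (1 / s j - ?D) + ?D / \<alpha>)"
    by (simp add: load_def algebra_simps)
  also have "\<dots> \<le> - (\<epsilon>^2 / (8 * real (max_deg n E) * s_max n s ^ 3))"
    unfolding g_def by (rule edge_drift_le[OF s_i s_j eps _ d gap]) (simp add: \<alpha>_def)
  finally show ?thesis .
qed

lemma max_deg_pos_if_not_nash: "\<not> nash n E s x \<Longrightarrow> 0 < max_deg n E"
proof -
  assume "\<not> nash n E s x"
  then obtain i j where "i < n" "j < n" "E i j" by (auto simp: nash_def)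
  then have "0 < deg n E i" by (intro deg_pos) (auto simp: nbrs_def)
  then show ?thesis using deg_le_max_deg[of i n E] \<open>i < n\<close> by linarith
qed

lemma expectation_phi_step_le:
  assumes E_sym: "\<forall>i j. E i j \<longrightarrow> E j i" and E_irrefl: "\<forall>i. \<not> E i i"
    and eps: "0 < \<epsilon>" "\<epsilon> \<le> 1"
    and speeds: "\<forall>i<n. \<exists>k::nat. k > 0 \<and> s i = real k * \<epsilon>"
    and min_speed: "(MIN i\<in>{..<n}. s i) = 1"
    and not_nash: "\<not> nash n E s x"
  shows "measure_pmf.expectation (step n E s (4 * s_max n s / \<epsilon>) x) (phi n s)
    \<le> phi n s x - \<epsilon>^2 / (8 * real (max_deg n E) * s_max n s ^ 3)"
proof -
  define \<alpha> where "\<alpha> = 4 * s_max n s / \<epsilon>"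
  define V where "V = \<epsilon>^2 / (8 * real (max_deg n E) * s_max n s ^ 3)"
  define p where "p = (\<lambda>i k. pmf (task_dest n E s \<alpha> x i) k)"
  define f where "f = (\<lambda>i j. if i = j then 0 else real (x i) * p i j)"
  define contrib where "contrib = (\<lambda>i j.
      f i j * (2 * (real (x j) / s j - real (x i) / s i + 1 / s j))
      + (f i j)^2 * (real (deg n E i) / s i + real (deg n E j) / s j))"
  obtain i0 j0 where ij0: "i0 < n" "j0 < n" "E i0 j0" "load s x i0 - load s x j0 > 1 / s j0"
    using not_nash unfolding nash_def by auto
  have s_ge_1: "1 \<le> s i" if "i < n" for i using speed_ge_1[OF min_speed that] .
  then have s_pos: "\<forall>i<n. 0 < s i" by (auto intro: less_le_trans[OF zero_less_one])
  have "1 \<le> s_max n s" using s_ge_1[OF ij0(1)] speed_le_s_max[of i0 n s] ij0(1) by linarith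
  then have "1 \<le> \<alpha>" and "0 \<le> V" using eps unfolding \<alpha>_def V_def
    by (simp_all add: le_divide_eq not_less)
  have contrib_le:
    "contrib i j \<le> (if j \<in> nbrs n E i \<and> load s x i - load s x j > 1 / s j then - V else 0)"
    if "i < n" "j < n" for i j
  proof -
    have "f i j = (if j \<in> nbrs n E i \<and> load s x i - load s x j > 1 / s j
        then (load s x i - load s x j)
          / (real (max (deg n E i) (deg n E j)) * \<alpha> * (1 / s i + 1 / s j))
        else 0)"
      using expected_flow_task_dest[of j i n s \<alpha> x E] that s_pos \<open>1 \<le> \<alpha>\<close> E_irrefl
      by (auto simp: f_def p_def nbrs_def)
    then show ?thesis
      using active_edge_term_le[OF that(1) _ _ eps speeds min_speed, of j E x]
      by (simp add: contrib_def V_def \<alpha>_def split: if_splits)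
  qed
  have "measure_pmf.expectation (step n E s \<alpha> x) (phi n s)
      = (\<Sum>k<n. ((\<Sum>i<n. real (x i) * p i k)^2 + (\<Sum>i<n. real (x i) * (p i k * (1 - p i k)))
                 + (\<Sum>i<n. real (x i) * p i k)) / s k)"
    unfolding p_def by (rule expectation_phi_step[OF s_pos])
  also have "\<dots> \<le> (\<Sum>k<n. (real (x k)^2 + real (x k)) / s k) + (\<Sum>i<n. \<Sum>j<n. contrib i j)"
    unfolding contrib_def f_def deg_def
  proof (rule expected_quadratic_le_flows[OF _ _ _ s_pos])
    show "\<forall>i<n. (\<Sum>j<n. p i j) = 1"
      unfolding p_def by (auto intro!: sum_pmf_eq_1 set_pmf_task_dest)
    show "\<forall>i<n. \<forall>j<n. j \<noteq> i \<longrightarrow> j \<notin> nbrs n E i \<longrightarrow> p i j = 0"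
      using set_pmf_task_dest_subset by (fastforce simp: p_def set_pmf_eq)
    show "\<forall>i<n. \<forall>j<n. j \<in> nbrs n E i \<longleftrightarrow> i \<in> nbrs n E j" using E_sym by (auto simp: nbrs_def)
  qed (auto simp: p_def nbrs_subset)
  also have "(\<Sum>k<n. (real (x k)^2 + real (x k)) / s k) = phi n s x"
    unfolding phi_def by (intro sum.cong) (simp_all add: power2_eq_square distrib_left)
  also have "(\<Sum>i<n. \<Sum>j<n. contrib i j) \<le> contrib i0 j0"
  proof (rule double_sum_le_term[OF _ ij0(1,2)])
    show "\<forall>i<n. \<forall>j<n. contrib i j \<le> 0"
      using contrib_le \<open>0 \<le> V\<close> by (smt (verit))
  qed
  also have "contrib i0 j0 \<le> - V"
    using contrib_le[OF ij0(1,2)] ij0 by (simp add: nbrs_def)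
  finally show ?thesis unfolding \<alpha>_def V_def by simp
qed

section \<open>Stopped values along the paths of a finite Markov chain\<close>

primrec path_pmf :: "('s \<Rightarrow> 's pmf) \<Rightarrow> 's \<Rightarrow> nat \<Rightarrow> 's list pmf" where
  "path_pmf K x0 0 = return_pmf [x0]"
| "path_pmf K x0 (Suc t) = path_pmf K x0 t \<bind> (\<lambda>h. map_pmf (\<lambda>y. h @ [y]) (K (last h)))"

lemma length_path_pmf: "h \<in> set_pmf (path_pmf K x0 t) \<Longrightarrow> length h = Suc t"
  by (induction t arbitrary: h) auto

lemma finite_set_path_pmf:
  "(\<And>x. finite (set_pmf (K x))) \<Longrightarrow> finite (set_pmf (path_pmf K x0 t))"
  by (induction t) auto

lemma path_pmf_invariant:
  assumes "Q x0" and "\<And>x y. Q x \<Longrightarrow> y \<in> set_pmf (K x) \<Longrightarrow> Q y"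
  shows "h \<in> set_pmf (path_pmf K x0 t) \<Longrightarrow> \<forall>z\<in>set h. Q z"
proof (induction t arbitrary: h)
  case (Suc t)
  then obtain h' y
    where h': "h' \<in> set_pmf (path_pmf K x0 t)" "h = h' @ [y]" "y \<in> set_pmf (K (last h'))"
    by auto
  have "last h' \<in> set h'" using length_path_pmf[OF h'(1)] by (intro last_in_set) auto
  then show ?case using Suc.IH[OF h'(1)] h' assms(2) by auto
qed (use assms(1) in simp)

lemma pmf_path_pmf_Suc:
  "pmf (path_pmf K x0 (Suc t)) (h @ [y]) = pmf (path_pmf K x0 t) h * pmf (K (last h)) y"
proof -
  have "pmf (map_pmf (\<lambda>y. h' @ [y]) (K (last h'))) (h @ [y])
      = indicator {h} h' * pmf (K (last h)) y" for h'
  proof (cases "h' = h")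
    case True
    have "inj (\<lambda>y. h @ [y])" by (auto simp: inj_def)
    from pmf_map_inj'[OF this] show ?thesis using True by simp
  next
    case False
    then have "h @ [y] \<notin> (\<lambda>y. h' @ [y]) ` set_pmf (K (last h'))" by auto
    then show ?thesis using False by (simp add: pmf_map_outside)
  qed
  then show ?thesis by (simp add: pmf_bind measure_pmf_single)
qed

definition stop_time :: "('s \<Rightarrow> bool) \<Rightarrow> (nat \<Rightarrow> 's) \<Rightarrow> nat \<Rightarrow> nat" where
  "stop_time P xs t = (if \<exists>k\<le>t. P (xs k) then LEAST k. P (xs k) else t)"

definition stopped_value ::
    "('s \<Rightarrow> real) \<Rightarrow> ('s \<Rightarrow> bool) \<Rightarrow> real \<Rightarrow> (nat \<Rightarrow> 's) \<Rightarrow> nat \<Rightarrow> ennreal" where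
  "stopped_value \<psi> P V xs t = ennreal (\<psi> (xs (stop_time P xs t)) + real (stop_time P xs t) * V)"

lemma stop_time_le: "stop_time P xs t \<le> t"
  unfolding stop_time_def by (auto intro: Least_le order_trans)

lemma stop_time_eq_Least: "P (xs k) \<Longrightarrow> k \<le> t \<Longrightarrow> stop_time P xs t = (LEAST k. P (xs k))"
  unfolding stop_time_def by auto

lemma stop_time_cong:
  assumes "\<forall>k\<le>t. xs k = ys k"
  shows "stop_time P xs t = stop_time P ys t"
proof (cases "\<exists>k\<le>t. P (xs k)")
  case True
  then obtain k where k: "k \<le> t" "P (xs k)" by blast
  define T where "T = (LEAST k. P (xs k))"
  have "P (xs T)" unfolding T_def using k(2) by (rule LeastI)
  have "T \<le> k" unfolding T_def using k(2) by (rule Least_le)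
  have "(LEAST k. P (ys k)) = T"
  proof (rule Least_equality)
    show "P (ys T)" using \<open>P (xs T)\<close> \<open>T \<le> k\<close> k(1) assms by simp
    show "T \<le> j" if "P (ys j)" for j
    proof (cases "j \<le> t")
      case True
      then show ?thesis unfolding T_def using that assms by (simp add: Least_le)
    qed (use \<open>T \<le> k\<close> k(1) in simp)
  qed
  moreover have "\<exists>k\<le>t. P (ys k)" using k assms by auto
  ultimately show ?thesis using True by (simp add: stop_time_def T_def)
next
  case False
  moreover from this have "\<not> (\<exists>k\<le>t. P (ys k))" using assms by simp
  ultimately show ?thesis unfolding stop_time_def by (simp only: if_False)
qed

lemma stopped_value_cong:
  "\<forall>k\<le>t. xs k = ys k \<Longrightarrow> stopped_value \<psi> P V xs t = stopped_value \<psi> P V ys t"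
  using stop_time_cong[of t xs ys P] stop_time_le[of P ys t] by (simp add: stopped_value_def)

lemma stop_time_Suc:
  "stop_time P xs (Suc t) = (if \<exists>k\<le>t. P (xs k) then stop_time P xs t else Suc t)"
proof (cases "\<exists>k\<le>t. P (xs k)")
  case False
  then have "(LEAST k. P (xs k)) = Suc t" if "P (xs (Suc t))"
    using that by (intro Least_equality) (auto simp: not_less_eq_eq[symmetric])
  then show ?thesis using False by (auto simp: stop_time_def le_Suc_eq)
qed (auto simp: stop_time_def le_Suc_eq)

lemma nn_integral_stopped_value_Suc_le:
  fixes K :: "'s \<Rightarrow> 's pmf"
  assumes len: "length h = Suc t"
    and finite_K: "finite (set_pmf (K (last h)))"
    and \<psi>_nonneg: "\<And>y. y \<in> set_pmf (K (last h)) \<Longrightarrow> 0 \<le> \<psi> y"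
    and drift: "\<not> P (last h) \<Longrightarrow> measure_pmf.expectation (K (last h)) \<psi> \<le> \<psi> (last h) - V"
    and V_pos: "\<not> P (last h) \<Longrightarrow> 0 < V"
  shows "(\<integral>\<^sup>+y. stopped_value \<psi> P V ((!) (h @ [y])) (Suc t) \<partial>K (last h))
    \<le> stopped_value \<psi> P V ((!) h) t"
proof -
  have prefix: "\<forall>k\<le>t. (h @ [y]) ! k = h ! k" for y using len by (auto simp: nth_append)
  have last_h: "h ! t = last h" using len by (subst last_conv_nth) auto
  show ?thesis
  proof (cases "\<exists>k\<le>t. P (h ! k)")
    case True
    have "stopped_value \<psi> P V ((!) (h @ [y])) (Suc t) = stopped_value \<psi> P V ((!) h) t" for y
    proof -
      have "\<exists>k\<le>t. P ((h @ [y]) ! k)" using True prefix[of y] by auto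
      then have "stop_time P ((!) (h @ [y])) (Suc t) = stop_time P ((!) (h @ [y])) t"
        by (simp add: stop_time_Suc)
      then show ?thesis
        using stopped_value_cong[OF prefix[of y]] by (simp add: stopped_value_def)
    qed
    then show ?thesis by (simp add: measure_pmf.emeasure_space_1)
  next
    case False
    then have not_P: "\<not> P (last h)" using last_h by auto
    have stop_h: "stop_time P ((!) h) t = t"
      unfolding stop_time_def using False by (simp only: if_False)
    have "stopped_value \<psi> P V ((!) (h @ [y])) (Suc t) = ennreal (\<psi> y + real (Suc t) * V)" for y
      using False prefix[of y] len by (simp add: stopped_value_def stop_time_Suc nth_append)
    then have "(\<integral>\<^sup>+y. stopped_value \<psi> P V ((!) (h @ [y])) (Suc t) \<partial>K (last h))
        = ennreal (measure_pmf.expectation (K (last h)) (\<lambda>y. \<psi> y + real (Suc t) * V))"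
      using \<psi>_nonneg V_pos[OF not_P]
      by (simp, intro nn_integral_eq_integral integrable_measure_pmf_finite finite_K)
         (auto simp: AE_measure_pmf_iff)
    also have "measure_pmf.expectation (K (last h)) (\<lambda>y. \<psi> y + real (Suc t) * V)
        = measure_pmf.expectation (K (last h)) \<psi> + real (Suc t) * V"
      using integrable_measure_pmf_finite[OF finite_K, of \<psi>] by (simp add: measure_pmf.prob_space)
    also have "\<dots> \<le> \<psi> (last h) + real t * V"
      using drift[OF not_P] by (simp add: algebra_simps)
    finally show ?thesis
      using stop_h last_h by (simp add: stopped_value_def ennreal_leI)
  qed
qed

theorem nn_integral_stopped_value_path_pmf_le:
  fixes K :: "'s \<Rightarrow> 's pmf"
  assumes finite_K: "\<And>x. finite (set_pmf (K x))"
    and Q_x0: "Q x0" and Q_K: "\<And>x y. Q x \<Longrightarrow> y \<in> set_pmf (K x) \<Longrightarrow> Q y"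
    and \<psi>_nonneg: "\<And>x. Q x \<Longrightarrow> 0 \<le> \<psi> x"
    and drift: "\<And>x. Q x \<Longrightarrow> \<not> P x \<Longrightarrow> measure_pmf.expectation (K x) \<psi> \<le> \<psi> x - V"
    and V_pos: "\<And>x. Q x \<Longrightarrow> \<not> P x \<Longrightarrow> 0 < V"
  shows "(\<integral>\<^sup>+h. stopped_value \<psi> P V ((!) h) t \<partial>path_pmf K x0 t) \<le> ennreal (\<psi> x0)"
proof (induction t)
  case 0
  have "stop_time P ((!) [x0]) 0 = 0" using stop_time_le[of P _ 0] by simp
  then show ?case by (simp add: stopped_value_def)
next
  case (Suc t)
  have "(\<integral>\<^sup>+h. stopped_value \<psi> P V ((!) h) (Suc t) \<partial>path_pmf K x0 (Suc t))
      \<le> (\<integral>\<^sup>+h. stopped_value \<psi> P V ((!) h) t \<partial>path_pmf K x0 t)"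
    unfolding path_pmf.simps nn_integral_bind_pmf nn_integral_map_pmf
  proof (intro nn_integral_mono_AE, unfold AE_measure_pmf_iff, intro ballI)
    fix h assume h: "h \<in> set_pmf (path_pmf K x0 t)"
    then have "length h = Suc t" by (rule length_path_pmf)
    moreover have "\<forall>z\<in>set h. Q z"
      by (rule path_pmf_invariant[where K = K]) (use Q_x0 Q_K h in auto)
    then have "Q (last h)"
      using \<open>length h = Suc t\<close> by (metis last_in_set list.size(3) nat.distinct(1))
    ultimately show "(\<integral>\<^sup>+y. stopped_value \<psi> P V ((!) (h @ [y])) (Suc t) \<partial>K (last h))
        \<le> stopped_value \<psi> P V ((!) h) t"
      using Q_K by (intro nn_integral_stopped_value_Suc_le finite_K \<psi>_nonneg drift V_pos) auto
  qed
  then show ?case using Suc.IH by (rule order.trans)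
qed

lemma stopped_limit_le_liminf:
  assumes \<psi>_nonneg: "\<forall>t. 0 \<le> \<psi> (xs t)" and V_pos: "(\<forall>t. \<not> P (xs t)) \<Longrightarrow> 0 < V"
  shows "(if \<exists>t. P (xs t)
          then ennreal (\<psi> (xs (LEAST t. P (xs t))) + real (LEAST t. P (xs t)) * V) else \<infinity>)
    \<le> liminf (stopped_value \<psi> P V xs)"
proof (cases "\<exists>t. P (xs t)")
  case True
  define T where "T = (LEAST t. P (xs t))"
  have "P (xs T)" using True unfolding T_def by (rule LeastI_ex)
  then have "stopped_value \<psi> P V xs t = ennreal (\<psi> (xs T) + real T * V)" if "T \<le> t" for t
    using stop_time_eq_Least[of P xs T t] that by (simp add: stopped_value_def T_def)
  then have "ennreal (\<psi> (xs T) + real T * V) \<le> liminf (stopped_value \<psi> P V xs)"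
    by (intro Liminf_bounded) (auto simp: eventually_sequentially intro!: exI[of _ T])
  then show ?thesis using True by (simp add: T_def)
next
  case False
  have "stopped_value \<psi> P V xs = (\<lambda>t. ennreal (\<psi> (xs t) + real t * V))"
    using False by (simp add: fun_eq_iff stopped_value_def stop_time_def)
  moreover have "((\<lambda>t. ennreal (\<psi> (xs t) + real t * V)) \<longlongrightarrow> top) sequentially"
  proof -
    have "filterlim (\<lambda>t. V * real t) at_top sequentially"
      using V_pos False
      by (intro filterlim_tendsto_pos_mult_at_top filterlim_real_sequentially) auto
    then have "filterlim (\<lambda>t. real t * V) at_top sequentially" by (simp add: mult.commute)
    then have "filterlim (\<lambda>t. \<psi> (xs t) + real t * V) at_top sequentially"
      by (rule filterlim_at_top_mono) (use \<psi>_nonneg in auto)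
    then show ?thesis by (simp add: ennreal_tendsto_top_eq_at_top)
  qed
  ultimately show ?thesis
    using False by (simp add: lim_imp_Liminf)
qed

section \<open>Optional stopping for a process with the law of the chain\<close>

locale pmf_markov_process = prob_space M for M :: "'w measure" +
  fixes K :: "'s \<Rightarrow> 's pmf" and x0 :: 's and X :: "nat \<Rightarrow> 'w \<Rightarrow> 's"
  assumes finite_K: "\<And>x. finite (set_pmf (K x))"
    and X_measurable: "\<And>t. X t \<in> measurable M (count_space UNIV)"
    and X_0: "\<And>\<omega>. \<omega> \<in> space M \<Longrightarrow> X 0 \<omega> = x0"
    and X_Suc: "\<And>t h y. measure M {\<omega> \<in> space M. (\<forall>k\<le>t. X k \<omega> = h k) \<and> X (Suc t) \<omega> = y}
      = measure M {\<omega> \<in> space M. \<forall>k\<le>t. X k \<omega> = h k} * pmf (K (h t)) y"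
begin

definition path :: "nat \<Rightarrow> 'w \<Rightarrow> 's list" where
  "path t \<omega> = map (\<lambda>k. X k \<omega>) [0..<Suc t]"

lemma length_path [simp]: "length (path t \<omega>) = Suc t"
  by (simp add: path_def)

lemma nth_path: "k \<le> t \<Longrightarrow> path t \<omega> ! k = X k \<omega>"
  by (simp add: path_def nth_append del: upt_Suc)

lemma path_eq_iff: "length h = Suc t \<Longrightarrow> path t \<omega> = h \<longleftrightarrow> (\<forall>k\<le>t. X k \<omega> = h ! k)"
  by (auto simp: list_eq_iff_nth_eq nth_path)

lemma sets_path_eq: "{\<omega> \<in> space M. path t \<omega> = h} \<in> sets M"
proof (cases "length h = Suc t")
  case True
  then have "{\<omega> \<in> space M. path t \<omega> = h} = (\<Inter>k\<in>{..t}. X k -` {h ! k} \<inter> space M)"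
    by (auto simp: path_eq_iff)
  also have "\<dots> \<in> sets M"
    using X_measurable by (intro sets.finite_INT) (auto intro: measurable_sets)
  finally show ?thesis .
next
  case False
  then have "{\<omega> \<in> space M. path t \<omega> = h} = {}" by auto
  then show ?thesis by (metis sets.empty_sets)
qed

lemma measure_path_eq: "measure M {\<omega> \<in> space M. path t \<omega> = h} = pmf (path_pmf K x0 t) h"
proof (induction t arbitrary: h)
  case 0
  have "{\<omega> \<in> space M. path 0 \<omega> = h} = (if h = [x0] then space M else {})"
    using X_0 by (auto simp: path_def)
  then show ?case by (simp add: prob_space)
next
  case (Suc t)
  show ?case
  proof (cases "length h = Suc (Suc t)")
    case True
    then obtain h' y where h: "h = h' @ [y]" and h': "length h' = Suc t"
      by (metis length_Suc_conv_rev)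
    have "measure M {\<omega> \<in> space M. path (Suc t) \<omega> = h}
        = measure M {\<omega> \<in> space M. (\<forall>k\<le>t. X k \<omega> = h' ! k) \<and> X (Suc t) \<omega> = y}"
      using True h h'
      by (intro arg_cong[where f = "measure M"]) (auto simp: path_eq_iff nth_append le_Suc_eq)
    also have "\<dots> = measure M {\<omega> \<in> space M. \<forall>k\<le>t. X k \<omega> = h' ! k} * pmf (K (h' ! t)) y"
      by (rule X_Suc)
    also have "{\<omega> \<in> space M. \<forall>k\<le>t. X k \<omega> = h' ! k} = {\<omega> \<in> space M. path t \<omega> = h'}"
      using h' by (simp add: path_eq_iff)
    also have "h' ! t = last h'" using h' by (subst last_conv_nth) auto
    finally show ?thesis by (simp only: Suc.IH h pmf_path_pmf_Suc)
  next
    case False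
    then have "{\<omega> \<in> space M. path (Suc t) \<omega> = h} = {}" by auto
    moreover have "pmf (path_pmf K x0 (Suc t)) h = 0"
      using False by (metis length_path_pmf pmf_eq_0_set_pmf)
    ultimately show ?thesis by (metis measure_empty)
  qed
qed

lemma finite_set_path_pmf_K: "finite (set_pmf (path_pmf K x0 t))"
  using finite_K by (rule finite_set_path_pmf)

lemma AE_path_in_set_pmf: "AE \<omega> in M. path t \<omega> \<in> set_pmf (path_pmf K x0 t)"
proof -
  let ?S = "set_pmf (path_pmf K x0 t)" and ?A = "\<lambda>h. {\<omega> \<in> space M. path t \<omega> = h}"
  have "finite ?S" by (rule finite_set_path_pmf_K)
  have "prob (\<Union>h\<in>?S. ?A h) = (\<Sum>h\<in>?S. prob (?A h))"
    using \<open>finite ?S\<close> sets_path_eq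
    by (intro measure_finite_Union) (auto simp: disjoint_family_on_def emeasure_eq_measure)
  also have "\<dots> = 1"
    using \<open>finite ?S\<close> by (simp add: measure_path_eq sum_pmf_eq_1)
  finally have "AE \<omega> in M. \<omega> \<in> (\<Union>h\<in>?S. ?A h)"
    using \<open>finite ?S\<close> sets_path_eq by (subst prob_eq_1[symmetric]) auto
  then show ?thesis by auto
qed

text \<open>A measurable version of \<open>G \<circ> path t\<close>, which need not itself be measurable.\<close>
definition path_functional :: "('s list \<Rightarrow> ennreal) \<Rightarrow> nat \<Rightarrow> 'w \<Rightarrow> ennreal" where
  "path_functional G t \<omega> =
    (\<Sum>h\<in>set_pmf (path_pmf K x0 t). G h * indicator {\<omega> \<in> space M. path t \<omega> = h} \<omega>)"

lemma borel_measurable_path_functional: "path_functional G t \<in> borel_measurable M"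
  unfolding path_functional_def using sets_path_eq by measurable

lemma AE_path_functional_eq: "AE \<omega> in M. path_functional G t \<omega> = G (path t \<omega>)"
  using AE_path_in_set_pmf[of t] AE_space
proof eventually_elim
  case (elim \<omega>)
  then have "G h * indicator {\<omega> \<in> space M. path t \<omega> = h} \<omega> = (if h = path t \<omega> then G h else 0)"
    for h by (auto simp: indicator_def)
  then show ?case
    using elim finite_set_path_pmf_K by (simp add: path_functional_def sum.delta')
qed

lemma nn_integral_path_functional:
  "(\<integral>\<^sup>+\<omega>. path_functional G t \<omega> \<partial>M) = (\<integral>\<^sup>+h. G h \<partial>path_pmf K x0 t)"
proof -
  have "(\<integral>\<^sup>+\<omega>. path_functional G t \<omega> \<partial>M)
      = (\<Sum>h\<in>set_pmf (path_pmf K x0 t). G h * emeasure M {\<omega> \<in> space M. path t \<omega> = h})"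
    unfolding path_functional_def using sets_path_eq
    by (simp add: nn_integral_sum nn_integral_cmult_indicator)
  also have "\<dots> = (\<Sum>h\<in>set_pmf (path_pmf K x0 t). G h * pmf (path_pmf K x0 t) h)"
    by (simp add: emeasure_eq_measure measure_path_eq)
  also have "\<dots> = (\<integral>\<^sup>+h. G h \<partial>path_pmf K x0 t)"
    by (simp add: nn_integral_measure_pmf_finite[OF finite_set_path_pmf_K])
  finally show ?thesis .
qed

theorem nn_integral_stopped_limit_le:
  assumes Q_x0: "Q x0" and Q_K: "\<And>x y. Q x \<Longrightarrow> y \<in> set_pmf (K x) \<Longrightarrow> Q y"
    and \<psi>_nonneg: "\<And>x. Q x \<Longrightarrow> 0 \<le> \<psi> x"
    and drift: "\<And>x. Q x \<Longrightarrow> \<not> P x \<Longrightarrow> measure_pmf.expectation (K x) \<psi> \<le> \<psi> x - V"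
    and V_pos: "\<And>x. Q x \<Longrightarrow> \<not> P x \<Longrightarrow> 0 < V"
  shows "(\<integral>\<^sup>+\<omega>. (if \<exists>t. P (X t \<omega>)
      then ennreal (\<psi> (X (LEAST t. P (X t \<omega>)) \<omega>) + real (LEAST t. P (X t \<omega>)) * V) else \<infinity>) \<partial>M)
    \<le> ennreal (\<psi> x0)"
proof -
  define F where "F = (\<lambda>t. path_functional (\<lambda>h. stopped_value \<psi> P V ((!) h) t) t)"
  have "AE \<omega> in M. \<forall>t. path t \<omega> \<in> set_pmf (path_pmf K x0 t) \<and>
      F t \<omega> = stopped_value \<psi> P V ((!) (path t \<omega>)) t"
    unfolding AE_all_countable F_def using AE_path_in_set_pmf AE_path_functional_eq by auto
  then have "AE \<omega> in M. (if \<exists>t. P (X t \<omega>)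
      then ennreal (\<psi> (X (LEAST t. P (X t \<omega>)) \<omega>) + real (LEAST t. P (X t \<omega>)) * V) else \<infinity>)
    \<le> liminf (\<lambda>t. F t \<omega>)"
  proof eventually_elim
    case (elim \<omega>)
    have "\<forall>z\<in>set (path t \<omega>). Q z" for t
      using elim by (intro path_pmf_invariant[where Q = Q and K = K, OF Q_x0 Q_K]) auto
    then have Q_X: "Q (X t \<omega>)" for t using nth_path[of t t \<omega>] nth_mem[of t "path t \<omega>"] by auto
    have "(\<lambda>t. F t \<omega>) = stopped_value \<psi> P V (\<lambda>k. X k \<omega>)"
      using elim by (auto intro!: stopped_value_cong simp: nth_path)
    then show ?case
      by (simp only:, intro stopped_limit_le_liminf) (use Q_X \<psi>_nonneg V_pos in auto)
  qed
  then have "(\<integral>\<^sup>+\<omega>. (if \<exists>t. P (X t \<omega>)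
      then ennreal (\<psi> (X (LEAST t. P (X t \<omega>)) \<omega>) + real (LEAST t. P (X t \<omega>)) * V) else \<infinity>) \<partial>M)
    \<le> (\<integral>\<^sup>+\<omega>. liminf (\<lambda>t. F t \<omega>) \<partial>M)"
    by (rule nn_integral_mono_AE)
  also have "\<dots> \<le> liminf (\<lambda>t. \<integral>\<^sup>+\<omega>. F t \<omega> \<partial>M)"
    unfolding F_def by (intro nn_integral_liminf borel_measurable_path_functional)
  also have "\<dots> \<le> ennreal (\<psi> x0)"
    unfolding F_def nn_integral_path_functional
    using nn_integral_stopped_value_path_pmf_le[where Q = Q and K = K,
        OF finite_K Q_x0 Q_K \<psi>_nonneg drift V_pos]
    by (intro Liminf_le) auto
  finally show ?thesis .
qed

end

lemma drift_bound_pos: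
  assumes "0 < \<epsilon>" "(MIN i\<in>{..<n}. s i) = 1" "\<not> nash n E s x"
  shows "0 < \<epsilon>^2 / (8 * real (max_deg n E) * s_max n s ^ 3)"
proof -
  obtain i where "i < n" using assms(3) by (auto simp: nash_def)
  then have "1 \<le> s_max n s"
    using speed_ge_1[OF assms(2) \<open>i < n\<close>] speed_le_s_max[of i n s] by linarith
  then show ?thesis using max_deg_pos_if_not_nash[OF assms(3)] assms(1) by simp
qed

lemma expectation_psi1_step_le:
  assumes "\<forall>i j. E i j \<longrightarrow> E j i" "\<forall>i. \<not> E i i" "0 < \<epsilon>" "\<epsilon> \<le> 1"
    and "\<forall>i<n. \<exists>k::nat. k > 0 \<and> s i = real k * \<epsilon>" "(MIN i\<in>{..<n}. s i) = 1"
    and "\<not> nash n E s x"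
  shows "measure_pmf.expectation (step n E s (4 * s_max n s / \<epsilon>) x) (psi1 n s m)
    \<le> psi1 n s m x - \<epsilon>^2 / (8 * real (max_deg n E) * s_max n s ^ 3)"
proof -
  let ?p = "step n E s (4 * s_max n s / \<epsilon>) x"
  define c where "c = psi1 n s m (\<lambda>_. 0)"
  have psi1: "psi1 n s m y = phi n s y + c" for y unfolding c_def by (rule psi1_eq_phi)
  have "measure_pmf.expectation ?p (psi1 n s m) = measure_pmf.expectation ?p (phi n s) + c"
    unfolding psi1[abs_def]
    using integrable_measure_pmf_finite[OF finite_set_pmf_step, where f = "phi n s"]
    by (simp add: measure_pmf.prob_space)
  then show ?thesis
    using expectation_phi_step_le[OF assms] psi1[of x] by simp
qed

theorem corollary29:
  fixes n m :: nat and E :: "nat \<Rightarrow> nat \<Rightarrow> bool" and s :: "nat \<Rightarrow> real" and \<epsilon> :: real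
    and M :: "'w measure" and X :: "nat \<Rightarrow> 'w \<Rightarrow> state" and x0 :: state
  assumes n_pos: "n \<ge> 1"
    and E_sym: "\<forall>i j. E i j \<longrightarrow> E j i"
    and E_irrefl: "\<forall>i. \<not> E i i"
    and eps: "0 < \<epsilon>" "\<epsilon> \<le> 1"
    and speeds: "\<forall>i<n. \<exists>k::nat. k > 0 \<and> s i = real k * \<epsilon>"
    and min_speed: "(MIN i\<in>{..<n}. s i) = 1"
    and tasks: "(\<Sum>i<n. x0 i) = m"
    and P: "prob_space M"
    and X_meas: "\<forall>t. X t \<in> measurable M (count_space UNIV)"
    and X_init: "\<forall>\<omega>\<in>space M. X 0 \<omega> = x0"
    and X_markov: "\<forall>t (h :: nat \<Rightarrow> state) y.
        measure M {\<omega> \<in> space M. (\<forall>k\<le>t. X k \<omega> = h k) \<and> X (Suc t) \<omega> = y}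
        = measure M {\<omega> \<in> space M. \<forall>k\<le>t. X k \<omega> = h k}
          * pmf (step n E s (4 * s_max n s / \<epsilon>) (h t)) y"
  shows "(\<integral>\<^sup>+\<omega>. Z_stop n E s m (\<epsilon>\<^sup>2 / (8 * real (max_deg n E) * s_max n s ^ 3)) (\<lambda>t. X t \<omega>) \<partial>M)
         \<le> ennreal (psi1 n s m x0)"
proof -
  interpret pmf_markov_process M "step n E s (4 * s_max n s / \<epsilon>)" x0 X
    using X_meas X_init X_markov finite_set_pmf_step
    by (intro pmf_markov_process.intro[OF P] pmf_markov_process_axioms.intro) auto
  have s_pos: "\<forall>i<n. 0 < s i"
    using speed_ge_1[OF min_speed] by (auto intro: less_le_trans[OF zero_less_one])
  show ?thesis
    unfolding Z_stop_def
  proof (rule nn_integral_stopped_limit_le[where Q = "\<lambda>y. (\<Sum>i<n. y i) = m"])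
    show "(\<Sum>i<n. x0 i) = m" by (rule tasks)
    show "(\<Sum>i<n. z i) = m"
      if "(\<Sum>i<n. y i) = m" "z \<in> set_pmf (step n E s (4 * s_max n s / \<epsilon>) y)" for y z
      using sum_step_eq[OF that(2)] that(1) by simp
    show "0 \<le> psi1 n s m y" if "(\<Sum>i<n. y i) = m" for y
      using psi1_nonneg[OF s_pos that] .
    show "measure_pmf.expectation (step n E s (4 * s_max n s / \<epsilon>) y) (psi1 n s m)
        \<le> psi1 n s m y - \<epsilon>\<^sup>2 / (8 * real (max_deg n E) * s_max n s ^ 3)"
      if "\<not> nash n E s y" for y
      using expectation_psi1_step_le[OF E_sym E_irrefl eps speeds min_speed that] .
    show "0 < \<epsilon>\<^sup>2 / (8 * real (max_deg n E) * s_max n s ^ 3)" if "\<not> nash n E s y" for y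
      using drift_bound_pos[OF eps(1) min_speed that] .
  qed
qed

end
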